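(* Let $\mathcal H$, $\mathcal O$, $\mathcal U$, $e_a$, $X_{e_a}$, $Y_{e_a}$ be as in the context. Identify $\mathcal O^*$ with $\mathcal O$ via $\xi(a)=\operatorname{tr}(\widetilde\xi a)$, and for $1\le k\le n$ let $\mathcal D^k=\{\xi\in\mathcal O^*:\widetilde\xi\ge0,\ \operatorname{tr}\widetilde\xi=1,\ \operatorname{rank}\widetilde\xi=k\}$ (the density operators of rank $k$), which is a smooth embedded submanifold of $\mathcal O^*$ contained in $\mathcal U$. Then for every $a\in\mathcal O$ and every $k$, the vector fields $X_{e_a}$ and $Y_{e_a}$ are tangent to $\mathcal D^k$ at every point of $\mathcal D^k$. Explicitly, at $\rho\in\mathcal D^k$, the tangent vectors $X_{e_a}(\rho)$ and $Y_{e_a}(\rho)$ correspond to the Hermitian operators $\tfrac{i}{2}[a,\widetilde\rho]$ and $\tfrac12(a\widetilde\rho+\widetilde\rho a)-\operatorname{tr}(\widetilde\rho a)\widetilde\rho$ respectively.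
   Context: $\mathcal H$ is a complex Hilbert space of dimension $n<\infty$; $\mathcal O$ the real vector space of Hermitian operators; $[[a,b]]=-\tfrac{i}{2}(ab-ba)$, $a\odot b=\tfrac12(ab+ba)$; $f_a(\xi)=\xi(a)$; $\mathcal U=\{\xi:\xi(\mathbb I)\neq0\}$; $e_a=f_a/f_{\mathbb I}$ on $\mathcal U$. $\Lambda_{\mathcal D},\mathcal R_{\mathcal D}$ are the contravariant 2-tensors on $\mathcal U$ with $\Lambda_{\mathcal D}(de_a,de_b)=e_{[[a,b]]}$, $\mathcal R_{\mathcal D}(de_a,de_b)=e_{a\odot b}-e_ae_b$, and all pairings of $df_{\mathbb I}$ with $de_a$ or $df_{\mathbb I}$ equal to $0$; $X_f(g)=\Lambda_{\mathcal D}(df,dg)$, $Y_f(g)=\mathcal R_{\mathcal D}(df,dg)$. *)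

theory Defs
  imports "HOL-Analysis.Analysis"
begin

text \<open>H = complex n-space with n = CARD('n). Operators are complex n x n matrices.
  Elements xi of O* are identified with Hermitian matrices via xi(a) = tr(xi a).\<close>

type_synonym 'n cmat = "complex^'n^'n"

definition adj :: "('n::finite) cmat \<Rightarrow> ('n::finite) cmat" where
  "adj A = (\<chi> i j. cnj (A $ j $ i))"

definition hermitian :: "('n::finite) cmat \<Rightarrow> bool" where
  "hermitian A \<longleftrightarrow> adj A = A"

definition cscale :: "complex \<Rightarrow> ('n::finite) cmat \<Rightarrow> ('n::finite) cmat" where
  "cscale c A = (\<chi> i j. c * A $ i $ j)"

definition psd :: "('n::finite) cmat \<Rightarrow> bool" where
  "psd A \<longleftrightarrow> (\<forall>x::complex^'n. 0 \<le> Re (\<Sum>i\<in>UNIV. cnj (x $ i) * (A *v x) $ i))"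

definition qbracket :: "('n::finite) cmat \<Rightarrow> ('n::finite) cmat \<Rightarrow> ('n::finite) cmat" where
  "qbracket a b = cscale (- \<i> / 2) (a ** b - b ** a)"

definition jordan :: "('n::finite) cmat \<Rightarrow> ('n::finite) cmat \<Rightarrow> ('n::finite) cmat" where
  "jordan a b = cscale (1/2) (a ** b + b ** a)"

text \<open>f_a(xi) = xi(a) = tr(xi a) (real for Hermitian xi, a)\<close>
definition f_obs :: "('n::finite) cmat \<Rightarrow> ('n::finite) cmat \<Rightarrow> real" where
  "f_obs a \<xi> = Re (trace (\<xi> ** a))"

definition U_set :: "('n::finite) cmat set" where
  "U_set = {\<xi>. hermitian \<xi> \<and> f_obs (mat 1) \<xi> \<noteq> 0}"

definition e_obs :: "('n::finite) cmat \<Rightarrow> ('n::finite) cmat \<Rightarrow> real" where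
  "e_obs a \<xi> = f_obs a \<xi> / f_obs (mat 1) \<xi>"

definition dd :: "(('n::finite) cmat \<Rightarrow> real) \<Rightarrow> ('n::finite) cmat \<Rightarrow> (('n::finite) cmat \<Rightarrow> real)" where
  "dd g \<xi> = frechet_derivative g (at \<xi>)"

text \<open>A contravariant 2-tensor at a point: real bilinear form on covectors.\<close>
definition bilin_cov :: "((('n::finite) cmat \<Rightarrow> real) \<Rightarrow> (('n::finite) cmat \<Rightarrow> real) \<Rightarrow> real) \<Rightarrow> bool" where
  "bilin_cov B \<longleftrightarrow>
     (\<forall>p q r (c::real). linear p \<longrightarrow> linear q \<longrightarrow> linear r \<longrightarrow>
        B (\<lambda>v. p v + q v) r = B p r + B q r \<and>
        B r (\<lambda>v. p v + q v) = B r p + B r q \<and>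
        B (\<lambda>v. c * p v) r = c * B p r \<and>
        B r (\<lambda>v. c * p v) = c * B r p)"

definition Lambda_D ::
  "(('n::finite) cmat \<Rightarrow> (('n::finite) cmat \<Rightarrow> real) \<Rightarrow> (('n::finite) cmat \<Rightarrow> real) \<Rightarrow> real) \<Rightarrow> bool" where
  "Lambda_D L \<longleftrightarrow> (\<forall>\<xi>\<in>U_set. bilin_cov (L \<xi>) \<and>
     (\<forall>a b. hermitian a \<longrightarrow> hermitian b \<longrightarrow>
        L \<xi> (dd (e_obs a) \<xi>) (dd (e_obs b) \<xi>) = e_obs (qbracket a b) \<xi>) \<and>
     (\<forall>a. hermitian a \<longrightarrow> L \<xi> (dd (f_obs (mat 1)) \<xi>) (dd (e_obs a) \<xi>) = 0 \<and>
                           L \<xi> (dd (e_obs a) \<xi>) (dd (f_obs (mat 1)) \<xi>) = 0) \<and>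
     L \<xi> (dd (f_obs (mat 1)) \<xi>) (dd (f_obs (mat 1)) \<xi>) = 0)"

definition R_D ::
  "(('n::finite) cmat \<Rightarrow> (('n::finite) cmat \<Rightarrow> real) \<Rightarrow> (('n::finite) cmat \<Rightarrow> real) \<Rightarrow> real) \<Rightarrow> bool" where
  "R_D R \<longleftrightarrow> (\<forall>\<xi>\<in>U_set. bilin_cov (R \<xi>) \<and>
     (\<forall>a b. hermitian a \<longrightarrow> hermitian b \<longrightarrow>
        R \<xi> (dd (e_obs a) \<xi>) (dd (e_obs b) \<xi>) = e_obs (jordan a b) \<xi> - e_obs a \<xi> * e_obs b \<xi>) \<and>
     (\<forall>a. hermitian a \<longrightarrow> R \<xi> (dd (f_obs (mat 1)) \<xi>) (dd (e_obs a) \<xi>) = 0 \<and>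
                           R \<xi> (dd (e_obs a) \<xi>) (dd (f_obs (mat 1)) \<xi>) = 0) \<and>
     R \<xi> (dd (f_obs (mat 1)) \<xi>) (dd (f_obs (mat 1)) \<xi>) = 0)"

definition density_rank :: "nat \<Rightarrow> ('n::finite) cmat set" where
  "density_rank k = {\<rho>. hermitian \<rho> \<and> psd \<rho> \<and> trace \<rho> = 1 \<and> rank \<rho> = k}"

definition tangent_to :: "('n::finite) cmat set \<Rightarrow> ('n::finite) cmat \<Rightarrow> ('n::finite) cmat \<Rightarrow> bool" where
  "tangent_to S p v \<longleftrightarrow> (\<exists>\<epsilon>>0. \<exists>\<gamma>::real \<Rightarrow> ('n::finite) cmat.
      \<gamma> C1_differentiable_on {-\<epsilon><..<\<epsilon>} \<and> (\<forall>t\<in>{-\<epsilon><..<\<epsilon>}. \<gamma> t \<in> S) \<and>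
      \<gamma> 0 = p \<and> (\<gamma> has_vector_derivative v) (at 0))"

end

theory Submission
  imports Defs
begin

text \<open>At a state \<rho> (trace 1) one has df_c = de_c + e_c(\<rho>) df_1, and the tensors annihilate df_1,
  so pairing the candidate vectors with df_c reduces to the defining values on de_a, de_c: traces
  against \<rho> of [[a,c]] and a \<odot> c. Both vectors have the form E\<rho> + \<rho>E' - tr(E\<rho> + \<rho>E') \<rho>, with E'
  the adjoint of E = (i/2) a, resp. E = a/2; this is the velocity at 0 of the curve
  t \<mapsto> S_t \<rho> S_t' / tr(S_t \<rho> S_t') with S_t = 1 + tE. For small t the matrix S_t is invertible,
  and congruence by an invertible matrix preserves Hermiticity, positivity and rank, so the curve
  stays among the density operators of rank k.\<close>

lemma adj_adj [simp]: "adj (adj A) = A"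
  by (simp add: adj_def vec_eq_iff)

lemma adj_add: "adj (A + B) = adj A + adj B"
  by (simp add: adj_def vec_eq_iff)

lemma adj_diff: "adj (A - B) = adj A - adj B"
  by (simp add: adj_def vec_eq_iff)

lemma adj_scaleR: "adj (r *\<^sub>R A) = r *\<^sub>R adj A"
  by (simp add: adj_def vec_eq_iff)

lemma adj_cscale: "adj (cscale c A) = cscale (cnj c) (adj A)"
  by (simp add: adj_def cscale_def vec_eq_iff)

lemma adj_mat_1 [simp]: "adj (mat 1) = mat 1"
  by (simp add: adj_def mat_def vec_eq_iff)

lemma adj_matrix_mult: "adj (A ** B) = adj B ** adj A"
  by (simp add: adj_def vec_eq_iff matrix_matrix_mult_def cnj_sum mult.commute)

lemma trace_adj: "trace (adj A) = cnj (trace A)"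
  by (simp add: adj_def trace_def cnj_sum)

lemma cscale_matrix_mult_left: "cscale c A ** B = cscale c (A ** B)"
  by (simp add: cscale_def vec_eq_iff matrix_matrix_mult_def sum_distrib_left mult.assoc)

lemma cscale_matrix_mult_right: "A ** cscale c B = cscale c (A ** B)"
  by (simp add: cscale_def vec_eq_iff matrix_matrix_mult_def sum_distrib_left algebra_simps)

lemma cscale_add: "cscale c (A + B) = cscale c A + cscale c B"
  by (simp add: cscale_def vec_eq_iff algebra_simps)

lemma cscale_minus_diff: "cscale (- c) (A - B) = cscale c (B - A)"
  by (simp add: cscale_def vec_eq_iff algebra_simps)

lemma cscale_of_real: "cscale (of_real r) A = r *\<^sub>R A"
  unfolding cscale_def vec_eq_iff by (simp add: scaleR_conv_of_real[where 'a=complex])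

lemma trace_cscale: "trace (cscale c A) = c * trace A"
  by (simp add: cscale_def trace_def sum_distrib_left)

lemma trace_scaleR: "trace (r *\<^sub>R (A::'n::finite cmat)) = of_real r * trace A"
  using trace_cscale[of "of_real r" A] by (simp add: cscale_of_real)

lemma matrix_add_rdistrib: "(A + B) ** (C::'a::semiring_1^'n^'n) = A ** C + B ** C"
  by (simp add: vec_eq_iff matrix_matrix_mult_def algebra_simps sum.distrib)

lemma matrix_diff_rdistrib: "(A - B) ** (C::'a::ring_1^'n^'n) = A ** C - B ** C"
  by (simp add: vec_eq_iff matrix_matrix_mult_def algebra_simps sum_subtractf)

lemma matrix_diff_ldistrib: "(C::'a::ring_1^'n^'n) ** (A - B) = C ** A - C ** B"
  by (simp add: vec_eq_iff matrix_matrix_mult_def algebra_simps sum_subtractf)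

lemma trace_hermitian_real: "hermitian A \<Longrightarrow> trace A \<in> \<real>"
  by (metis Reals_cnj_iff hermitian_def trace_adj)

lemma trace_mult_hermitian_real:
  assumes "hermitian A" "hermitian B"
  shows "trace (A ** B) \<in> \<real>"
proof -
  have "cnj (trace (A ** B)) = trace (B ** A)"
    using assms by (simp add: hermitian_def adj_matrix_mult flip: trace_adj)
  then show ?thesis
    by (simp add: Reals_cnj_iff trace_mul_sym[of B A])
qed

lemma linear_f_obs: "linear (f_obs c)"
  by (rule linearI)
    (simp_all add: f_obs_def matrix_add_rdistrib trace_add scalar_matrix_assoc[symmetric] trace_scaleR)

lemma has_derivative_f_obs: "(f_obs c has_derivative f_obs c) (at \<xi>)"
  using linear_f_obs bounded_linear_imp_has_derivative linear_conv_bounded_linear by blast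

lemma dd_f_obs: "dd (f_obs c) \<xi> = f_obs c"
  by (simp add: dd_def frechet_derivative_at[OF has_derivative_f_obs, symmetric])

lemma dd_e_obs:
  assumes "f_obs (mat 1) \<xi> = 1"
  shows "dd (e_obs b) \<xi> = (\<lambda>v. f_obs b v - e_obs b \<xi> * f_obs (mat 1) v)"
proof -
  have "(e_obs b has_derivative (\<lambda>v. f_obs b v - e_obs b \<xi> * f_obs (mat 1) v)) (at \<xi>)"
    unfolding e_obs_def[abs_def]
    by (rule derivative_eq_intros has_derivative_f_obs | simp add: assms)+
  then show ?thesis
    by (simp add: dd_def frechet_derivative_at[symmetric])
qed

lemma linear_dd_e_obs:
  assumes "f_obs (mat 1) \<xi> = 1"
  shows "linear (dd (e_obs b) \<xi>)"
  unfolding dd_e_obs[OF assms]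
  by (intro linearI) (simp_all add: linear_add[OF linear_f_obs] linear_scale[OF linear_f_obs] algebra_simps)

lemma bilin_cov_dd_f_obs:
  assumes norm: "f_obs (mat 1) \<xi> = 1"
    and B: "bilin_cov B" and p: "linear p" and annihil: "B p (dd (f_obs (mat 1)) \<xi>) = 0"
  shows "B p (dd (f_obs c) \<xi>) = B p (dd (e_obs c) \<xi>)"
proof -
  have lin_df1: "linear (\<lambda>v. e_obs c \<xi> * dd (f_obs (mat 1)) \<xi> v)"
    unfolding dd_f_obs
    by (intro linearI) (simp_all add: linear_add[OF linear_f_obs] linear_scale[OF linear_f_obs] algebra_simps)
  have "dd (f_obs c) \<xi> = (\<lambda>v. dd (e_obs c) \<xi> v + e_obs c \<xi> * dd (f_obs (mat 1)) \<xi> v)"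
    by (simp add: dd_e_obs[OF norm] dd_f_obs)
  then have "B p (dd (f_obs c) \<xi>)
      = B p (dd (e_obs c) \<xi>) + e_obs c \<xi> * B p (dd (f_obs (mat 1)) \<xi>)"
    using B p linear_dd_e_obs[OF norm] lin_df1 linear_f_obs unfolding bilin_cov_def dd_f_obs by auto
  with annihil show ?thesis
    by simp
qed

lemma hermitian_commutator:
  assumes "hermitian a" "hermitian \<rho>"
  shows "hermitian (cscale (\<i> / 2) (a ** \<rho> - \<rho> ** a))"
proof -
  have "adj (cscale (\<i> / 2) (a ** \<rho> - \<rho> ** a)) = cscale (- (\<i> / 2)) (\<rho> ** a - a ** \<rho>)"
    using assms by (simp add: hermitian_def adj_cscale adj_diff adj_matrix_mult)
  then show ?thesis
    by (simp add: hermitian_def cscale_minus_diff)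
qed

lemma hermitian_centered_anticommutator:
  assumes "hermitian a" "hermitian \<rho>"
  shows "hermitian (cscale (1/2) (a ** \<rho> + \<rho> ** a) - cscale (trace (\<rho> ** a)) \<rho>)"
proof -
  have "cnj (trace (\<rho> ** a)) = trace (\<rho> ** a)"
    using trace_mult_hermitian_real[OF assms(2,1)] by (simp add: Reals_cnj_iff)
  with assms show ?thesis
    by (simp add: hermitian_def adj_cscale adj_diff adj_add adj_matrix_mult add.commute)
qed

lemma trace_cycle3: "trace (A ** B ** C) = trace (C ** A ** (B::'a::comm_semiring_1^'n^'n))"
  using trace_mul_sym[of "A ** B" C] by (simp only: matrix_mul_assoc)

lemma Lambda_D_dd_f_obs:
  assumes L: "Lambda_D L" and a: "hermitian a" and c: "hermitian c"
    and \<rho>: "hermitian \<rho>" "trace \<rho> = 1"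
  shows "L \<rho> (dd (e_obs a) \<rho>) (dd (f_obs c) \<rho>) = f_obs c (cscale (\<i> / 2) (a ** \<rho> - \<rho> ** a))"
proof -
  have norm: "f_obs (mat 1) \<rho> = 1"
    by (simp add: f_obs_def \<rho>)
  then have "\<rho> \<in> U_set"
    using \<rho> by (simp add: U_set_def)
  then have bilin: "bilin_cov (L \<rho>)"
      and bracket: "L \<rho> (dd (e_obs a) \<rho>) (dd (e_obs c) \<rho>) = e_obs (qbracket a c) \<rho>"
      and annihil: "L \<rho> (dd (e_obs a) \<rho>) (dd (f_obs (mat 1)) \<rho>) = 0"
    using L a c unfolding Lambda_D_def by blast+
  then have "L \<rho> (dd (e_obs a) \<rho>) (dd (f_obs c) \<rho>) = e_obs (qbracket a c) \<rho>"
    using bilin_cov_dd_f_obs[OF norm bilin linear_dd_e_obs[OF norm] annihil] bracket by simp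
  also have "\<dots> = f_obs c (cscale (\<i> / 2) (a ** \<rho> - \<rho> ** a))"
    by (simp add: e_obs_def norm f_obs_def \<rho> qbracket_def cscale_matrix_mult_left cscale_matrix_mult_right
        matrix_diff_rdistrib matrix_diff_ldistrib trace_cscale trace_sub matrix_mul_assoc algebra_simps
        trace_cycle3[of \<rho> c a])
  finally show ?thesis .
qed

lemma R_D_dd_f_obs:
  assumes R: "R_D R" and a: "hermitian a" and c: "hermitian c"
    and \<rho>: "hermitian \<rho>" "trace \<rho> = 1"
  shows "R \<rho> (dd (e_obs a) \<rho>) (dd (f_obs c) \<rho>)
    = f_obs c (cscale (1/2) (a ** \<rho> + \<rho> ** a) - cscale (trace (\<rho> ** a)) \<rho>)"
proof -
  have norm: "f_obs (mat 1) \<rho> = 1"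
    by (simp add: f_obs_def \<rho>)
  then have "\<rho> \<in> U_set"
    using \<rho> by (simp add: U_set_def)
  then have bilin: "bilin_cov (R \<rho>)"
      and jordan: "R \<rho> (dd (e_obs a) \<rho>) (dd (e_obs c) \<rho>)
        = e_obs (jordan a c) \<rho> - e_obs a \<rho> * e_obs c \<rho>"
      and annihil: "R \<rho> (dd (e_obs a) \<rho>) (dd (f_obs (mat 1)) \<rho>) = 0"
    using R a c unfolding R_D_def by blast+
  then have "R \<rho> (dd (e_obs a) \<rho>) (dd (f_obs c) \<rho>)
      = e_obs (jordan a c) \<rho> - e_obs a \<rho> * e_obs c \<rho>"
    using bilin_cov_dd_f_obs[OF norm bilin linear_dd_e_obs[OF norm] annihil] by simp
  also have "\<dots> = Re (trace (\<rho> ** jordan a c) - trace (\<rho> ** a) * trace (\<rho> ** c))"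
    using trace_mult_hermitian_real[OF \<rho>(1) a] by (auto simp: e_obs_def f_obs_def \<rho> elim!: Reals_cases)
  also have "\<dots> = f_obs c (cscale (1/2) (a ** \<rho> + \<rho> ** a) - cscale (trace (\<rho> ** a)) \<rho>)"
    by (simp add: f_obs_def jordan_def cscale_matrix_mult_left cscale_matrix_mult_right
        matrix_diff_rdistrib matrix_add_rdistrib matrix_add_ldistrib trace_cscale trace_sub trace_add
        matrix_mul_assoc algebra_simps trace_cycle3[of \<rho> c a])
  finally show ?thesis .
qed

section \<open>Rank and positivity under congruence\<close>

lemma row_matrix_mult_left: "row i (P ** A) = (\<Sum>j\<in>UNIV. P$i$j *s row j (A::'a::field^'n^'m))"
  by (simp add: vec_eq_iff row_def matrix_matrix_mult_def sum_component vector_scalar_mult_def mult.commute)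

lemma row_matrix_mult_right: "row i ((A::'a::field^'n^'m) ** Q) = transpose Q *v row i A"
  by (simp add: vec_eq_iff row_def matrix_matrix_mult_def matrix_vector_mult_def transpose_def mult.commute)

lemma rank_mul_le_right_gen: "rank (P ** A) \<le> rank (A::'a::field^'n^'m)"
proof -
  have "rows (P ** A) \<subseteq> vec.span (rows A)"
  proof
    fix r assume "r \<in> rows (P ** A)"
    then obtain i where r: "r = row i (P ** A)"
      by (auto simp: rows_def)
    show "r \<in> vec.span (rows A)"
      unfolding r row_matrix_mult_left
      by (intro vec.span_sum vec.span_scale vec.span_base) (auto simp: rows_def)
  qed
  then show ?thesis
    by (simp add: row_rank_def_gen vec.dim_mono)
qed

lemma rank_mul_le_left_gen: "rank (A ** Q) \<le> rank (A::'a::field^'n^'m)"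
proof -
  have "rows (A ** Q) = (\<lambda>r. transpose Q *v r) ` rows A"
    by (auto simp: rows_def row_matrix_mult_right)
  then show ?thesis
    by (metis row_rank_def_gen vec.dim_image_le[OF matrix_vector_mul_linear_gen])
qed

lemma rank_invertible_mult:
  fixes A P Q :: "'a::field^'n^'n"
  assumes "invertible P" "invertible Q"
  shows "rank (P ** A ** Q) = rank A"
proof (rule antisym)
  show "rank (P ** A ** Q) \<le> rank A"
    by (metis rank_mul_le_right_gen rank_mul_le_left_gen order_trans)
  obtain P' Q' where "P' ** P = mat 1" "Q ** Q' = mat 1"
    using assms invertible_left_inverse invertible_right_inverse by blast
  then have "A = P' ** (P ** A ** Q) ** Q'"
    by (metis matrix_mul_assoc matrix_mul_lid matrix_mul_rid)
  then show "rank A \<le> rank (P ** A ** Q)"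
    by (metis rank_mul_le_right_gen rank_mul_le_left_gen order_trans)
qed

lemma invertible_adj:
  assumes "invertible S"
  shows "invertible (adj S)"
proof -
  obtain S' where "S ** S' = mat 1"
    using assms invertible_right_inverse by blast
  then have "adj S' ** adj S = mat 1"
    by (metis adj_mat_1 adj_matrix_mult)
  then show ?thesis
    using invertible_left_inverse by blast
qed

lemma quadratic_form_adj:
  "(\<Sum>i\<in>UNIV. cnj (x $ i) * ((S::'n::finite cmat) *v v) $ i) = (\<Sum>i\<in>UNIV. cnj ((adj S *v x) $ i) * v $ i)"
proof -
  have "(\<Sum>i\<in>UNIV. cnj (x $ i) * (S *v v) $ i) = (\<Sum>i\<in>UNIV. \<Sum>j\<in>UNIV. cnj (x $ i) * S $ i $ j * v $ j)"
    by (simp add: matrix_vector_mult_def sum_distrib_left mult.assoc)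
  also have "\<dots> = (\<Sum>j\<in>UNIV. \<Sum>i\<in>UNIV. cnj (x $ i) * S $ i $ j * v $ j)"
    by (rule sum.swap)
  also have "\<dots> = (\<Sum>j\<in>UNIV. cnj ((adj S *v x) $ j) * v $ j)"
    by (simp add: matrix_vector_mult_def adj_def sum_distrib_right sum_distrib_left cnj_sum mult_ac)
  finally show ?thesis .
qed

lemma psd_congruence:
  assumes "psd \<rho>"
  shows "psd (S ** \<rho> ** adj (S::'n::finite cmat))"
  unfolding psd_def
proof
  fix x :: "complex^'n"
  have "(S ** \<rho> ** adj S) *v x = S *v (\<rho> *v (adj S *v x))"
    by (simp add: matrix_vector_mul_assoc matrix_mul_assoc)
  then have "(\<Sum>i\<in>UNIV. cnj (x $ i) * ((S ** \<rho> ** adj S) *v x) $ i)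
      = (\<Sum>i\<in>UNIV. cnj ((adj S *v x) $ i) * (\<rho> *v (adj S *v x)) $ i)"
    by (simp add: quadratic_form_adj)
  then show "0 \<le> Re (\<Sum>i\<in>UNIV. cnj (x $ i) * ((S ** \<rho> ** adj S) *v x) $ i)"
    using assms unfolding psd_def by metis
qed

lemma psd_scaleR:
  assumes "psd M" "0 \<le> c"
  shows "psd (c *\<^sub>R (M::'n::finite cmat))"
  unfolding psd_def
proof
  fix x :: "complex^'n"
  have "(\<Sum>i\<in>UNIV. cnj (x $ i) * ((c *\<^sub>R M) *v x) $ i) = of_real c * (\<Sum>i\<in>UNIV. cnj (x $ i) * (M *v x) $ i)"
    by (simp add: matrix_vector_mult_def sum_distrib_left scaleR_conv_of_real[where 'a=complex] mult_ac)
  then show "0 \<le> Re (\<Sum>i\<in>UNIV. cnj (x $ i) * ((c *\<^sub>R M) *v x) $ i)"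
    using assms unfolding psd_def by simp
qed

lemma density_rank_congruence:
  assumes \<rho>: "\<rho> \<in> density_rank k" and S: "invertible S"
    and pos: "0 < Re (trace (S ** \<rho> ** adj S))"
  shows "(1 / Re (trace (S ** \<rho> ** adj S))) *\<^sub>R (S ** \<rho> ** adj S) \<in> density_rank k"
proof -
  define c where "c = Re (trace (S ** \<rho> ** adj S))"
  have c: "0 < c"
    using pos by (simp add: c_def)
  from \<rho> have herm: "hermitian \<rho>" and psd: "psd \<rho>" and rank: "rank \<rho> = k"
    by (auto simp: density_rank_def)
  have herm_conj: "hermitian (S ** \<rho> ** adj S)"
    using herm by (simp add: hermitian_def adj_matrix_mult matrix_mul_assoc)
  then have "trace (S ** \<rho> ** adj S) = of_real c"
    unfolding c_def by (metis Reals_cases Re_complex_of_real trace_hermitian_real)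
  then have "trace ((1 / c) *\<^sub>R (S ** \<rho> ** adj S)) = 1"
    using c by (simp add: trace_scaleR)
  moreover have "rank ((1 / c) *\<^sub>R (S ** \<rho> ** adj S)) = k"
    using rank_invertible_mult[OF scalar_invertible[OF _ S] invertible_adj[OF S]] c rank
    by (simp add: scalar_matrix_assoc)
  moreover have "hermitian ((1 / c) *\<^sub>R (S ** \<rho> ** adj S))"
    using herm_conj by (simp add: hermitian_def adj_scaleR)
  moreover have "psd ((1 / c) *\<^sub>R (S ** \<rho> ** adj S))"
    using c by (simp add: psd_scaleR psd_congruence psd)
  ultimately show ?thesis
    by (simp add: density_rank_def flip: c_def)
qed

section \<open>Curves of density operators\<close>

lemma congruence_id_plus_scaleR:
  fixes E \<rho> :: "'n::finite cmat"
  shows "(mat 1 + t *\<^sub>R E) ** \<rho> ** adj (mat 1 + t *\<^sub>R E)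
     = \<rho> + t *\<^sub>R (E ** \<rho> + \<rho> ** adj E) + t\<^sup>2 *\<^sub>R (E ** \<rho> ** adj E)"
  by (simp add: adj_add adj_scaleR matrix_add_ldistrib matrix_add_rdistrib
      scalar_matrix_assoc[symmetric] matrix_scalar_ac algebra_simps power2_eq_square)

lemma invertible_id_plus_small:
  fixes E :: "'n::finite cmat"
  assumes bound: "\<And>x. norm (E *v x) \<le> K * norm x" and small: "\<bar>t\<bar> * K < 1"
  shows "invertible (mat 1 + t *\<^sub>R E)"
  unfolding invertible_left_inverse matrix_left_invertible_ker
proof (intro allI impI)
  fix x assume "(mat 1 + t *\<^sub>R E) *v x = 0"
  moreover have "(t *\<^sub>R E) *v x = t *\<^sub>R (E *v x)"
    by (simp add: vec_eq_iff matrix_vector_mult_def scaleR_sum_right)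
  ultimately have "x = - (t *\<^sub>R (E *v x))"
    by (simp add: matrix_vector_mult_add_rdistrib eq_neg_iff_add_eq_0)
  then have "norm x = \<bar>t\<bar> * norm (E *v x)"
    by (metis norm_minus_cancel norm_scaleR)
  also have "\<dots> \<le> \<bar>t\<bar> * (K * norm x)"
    using bound by (rule mult_left_mono) simp
  also have "\<dots> = (\<bar>t\<bar> * K) * norm x"
    by simp
  finally have "(1 - \<bar>t\<bar> * K) * norm x \<le> 0"
    by (simp add: algebra_simps)
  then show "x = 0"
    using small by (simp add: mult_le_0_iff)
qed

lemma tangent_to_normalized_quadratic_curve:
  fixes \<rho> B C :: "'n::finite cmat" and \<beta> \<delta> :: real
  defines "p \<equiv> \<lambda>t. 1 + t * \<beta> + t\<^sup>2 * \<delta>"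
  assumes "0 < \<epsilon>" and p_nonzero: "\<And>t. t \<in> {-\<epsilon><..<\<epsilon>} \<Longrightarrow> p t \<noteq> 0"
    and mem: "\<And>t. t \<in> {-\<epsilon><..<\<epsilon>} \<Longrightarrow> (1 / p t) *\<^sub>R (\<rho> + t *\<^sub>R B + t\<^sup>2 *\<^sub>R C) \<in> S"
  shows "tangent_to S \<rho> (B - \<beta> *\<^sub>R \<rho>)"
proof -
  define M where "M t = \<rho> + t *\<^sub>R B + t\<^sup>2 *\<^sub>R C" for t
  define \<gamma> where "\<gamma> t = inverse (p t) *\<^sub>R M t" for t
  define D where "D t = inverse (p t) *\<^sub>R (B + (2 * t) *\<^sub>R C)
    + (- ((\<beta> + 2 * t * \<delta>) * inverse (p t ^ Suc (Suc 0)))) *\<^sub>R M t" for t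
  have deriv: "(\<gamma> has_vector_derivative D t) (at t)" if "p t \<noteq> 0" for t
  proof -
    have dp: "(p has_real_derivative (\<beta> + 2 * t * \<delta>)) (at t)"
      unfolding p_def by (auto intro!: derivative_eq_intros)
    have dM: "(M has_vector_derivative (B + (2 * t) *\<^sub>R C)) (at t)"
      unfolding M_def[abs_def] by (auto intro!: derivative_eq_intros)
    show ?thesis
      unfolding \<gamma>_def[abs_def] D_def
      by (rule has_vector_derivative_scaleR[OF DERIV_inverse_fun[OF dp that] dM])
  qed
  have "continuous_on {-\<epsilon><..<\<epsilon>} D"
    unfolding D_def M_def p_def by (intro continuous_intros) (auto dest: p_nonzero simp: p_def)
  then have "\<gamma> C1_differentiable_on {-\<epsilon><..<\<epsilon>}"
    unfolding C1_differentiable_on_def using deriv p_nonzero by blast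
  moreover have "\<gamma> t \<in> S" if "t \<in> {-\<epsilon><..<\<epsilon>}" for t
    using mem[OF that] by (simp add: \<gamma>_def M_def divide_inverse)
  moreover have "\<gamma> 0 = \<rho>" and "D 0 = B - \<beta> *\<^sub>R \<rho>"
    by (simp_all add: \<gamma>_def D_def M_def p_def)
  moreover have "p 0 \<noteq> 0"
    by (simp add: p_def)
  ultimately show ?thesis
    unfolding tangent_to_def using \<open>0 < \<epsilon>\<close> deriv by metis
qed

lemma tangent_to_density_rank_congruence:
  fixes E :: "'n::finite cmat"
  assumes \<rho>: "\<rho> \<in> density_rank k"
  shows "tangent_to (density_rank k) \<rho>
     ((E ** \<rho> + \<rho> ** adj E) - Re (trace (E ** \<rho> + \<rho> ** adj E)) *\<^sub>R \<rho>)"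
proof -
  define B where "B = E ** \<rho> + \<rho> ** adj E"
  define C where "C = E ** \<rho> ** adj E"
  define \<beta> where "\<beta> = Re (trace B)"
  define \<delta> where "\<delta> = Re (trace C)"
  define p where "p t = 1 + t * \<beta> + t\<^sup>2 * \<delta>" for t
  have "trace \<rho> = 1"
    using \<rho> by (simp add: density_rank_def)
  then have trace_orbit: "Re (trace (\<rho> + t *\<^sub>R B + t\<^sup>2 *\<^sub>R C)) = p t" for t
    by (simp add: trace_add trace_scaleR p_def \<beta>_def \<delta>_def)
  obtain K where K: "\<And>x. norm (E *v x) \<le> K * norm x"
    using bounded_linear.bounded[OF matrix_vector_mul_bounded_linear] by (metis mult.commute)
  have "\<forall>\<^sub>F t in nhds 0. 0 < p t \<and> \<bar>t\<bar> * K < 1"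
  proof (rule eventually_conj)
    have "(p \<longlongrightarrow> p 0) (nhds 0)"
      unfolding p_def by (intro tendsto_intros filterlim_ident)
    then show "\<forall>\<^sub>F t in nhds 0. 0 < p t"
      by (rule order_tendstoD(1)) (simp add: p_def)
    have "((\<lambda>t. \<bar>t\<bar> * K) \<longlongrightarrow> \<bar>0\<bar> * K) (nhds 0)"
      by (intro tendsto_intros filterlim_ident)
    then show "\<forall>\<^sub>F t in nhds 0. \<bar>t\<bar> * K < 1"
      by (rule order_tendstoD(2)) simp
  qed
  then obtain \<epsilon> where "0 < \<epsilon>" and small: "\<And>t. dist t 0 < \<epsilon> \<Longrightarrow> 0 < p t \<and> \<bar>t\<bar> * K < 1"
    unfolding eventually_nhds_metric by blast
  have p_pos: "0 < p t" and mem: "(1 / p t) *\<^sub>R (\<rho> + t *\<^sub>R B + t\<^sup>2 *\<^sub>R C) \<in> density_rank k"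
    if "t \<in> {-\<epsilon><..<\<epsilon>}" for t
  proof -
    from that have "dist t 0 < \<epsilon>"
      by (simp add: dist_real_def abs_less_iff)
    with small show "0 < p t" by blast
    with small \<open>dist t 0 < \<epsilon>\<close> show "(1 / p t) *\<^sub>R (\<rho> + t *\<^sub>R B + t\<^sup>2 *\<^sub>R C) \<in> density_rank k"
      using density_rank_congruence[OF \<rho> invertible_id_plus_small[OF K]]
      by (simp add: trace_orbit congruence_id_plus_scaleR flip: B_def C_def)
  qed
  have "tangent_to (density_rank k) \<rho> (B - \<beta> *\<^sub>R \<rho>)"
    using tangent_to_normalized_quadratic_curve[OF \<open>0 < \<epsilon>\<close>, of \<beta> \<delta> \<rho> B C] p_pos mem
    unfolding p_def by (metis less_irrefl)
  then show ?thesis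
    by (simp add: B_def \<beta>_def)
qed

lemma tangent_to_density_rank_commutator:
  assumes "\<rho> \<in> density_rank k" "hermitian a"
  shows "tangent_to (density_rank k) \<rho> (cscale (\<i> / 2) (a ** \<rho> - \<rho> ** a))"
proof -
  have "adj (cscale (\<i> / 2) a) = cscale (- (\<i> / 2)) a"
    using \<open>hermitian a\<close> by (simp add: hermitian_def adj_cscale)
  then have "cscale (\<i> / 2) a ** \<rho> + \<rho> ** adj (cscale (\<i> / 2) a)
      = cscale (\<i> / 2) (a ** \<rho>) + cscale (- (\<i> / 2)) (\<rho> ** a)"
    by (simp only: cscale_matrix_mult_left cscale_matrix_mult_right)
  also have "\<dots> = cscale (\<i> / 2) (a ** \<rho> - \<rho> ** a)"
    by (simp add: cscale_def vec_eq_iff algebra_simps)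
  finally have velocity: "cscale (\<i> / 2) a ** \<rho> + \<rho> ** adj (cscale (\<i> / 2) a)
      = cscale (\<i> / 2) (a ** \<rho> - \<rho> ** a)" .
  have "trace (cscale (\<i> / 2) (a ** \<rho> - \<rho> ** a)) = 0"
    by (simp add: trace_cscale trace_sub trace_mul_sym[of a \<rho>])
  with velocity show ?thesis
    using tangent_to_density_rank_congruence[OF assms(1), of "cscale (\<i> / 2) a"] by simp
qed

lemma tangent_to_density_rank_centered_anticommutator:
  assumes "\<rho> \<in> density_rank k" "hermitian a"
  shows "tangent_to (density_rank k) \<rho>
    (cscale (1/2) (a ** \<rho> + \<rho> ** a) - cscale (trace (\<rho> ** a)) \<rho>)"
proof -
  have "cscale (1/2) a ** \<rho> + \<rho> ** adj (cscale (1/2) a) = cscale (1/2) (a ** \<rho> + \<rho> ** a)"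
    using \<open>hermitian a\<close>
    by (simp add: hermitian_def adj_cscale cscale_matrix_mult_left cscale_matrix_mult_right cscale_add)
  moreover have "trace (cscale (1/2) (a ** \<rho> + \<rho> ** a)) = trace (\<rho> ** a)"
    by (simp add: trace_cscale trace_add trace_mul_sym[of a \<rho>])
  moreover have "of_real (Re (trace (\<rho> ** a))) = trace (\<rho> ** a)"
    using assms trace_mult_hermitian_real[of \<rho> a] by (simp add: density_rank_def Reals_cases)
  ultimately show ?thesis
    using tangent_to_density_rank_congruence[OF assms(1), of "cscale (1/2) a"]
    by (simp flip: cscale_of_real)
qed

theorem mainTheorem5:
  fixes L R :: "('n::finite) cmat \<Rightarrow> ('n cmat \<Rightarrow> real) \<Rightarrow> ('n cmat \<Rightarrow> real) \<Rightarrow> real"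
    and a \<rho> :: "'n cmat" and k :: nat
  assumes "Lambda_D L" and "R_D R"
    and "hermitian a"
    and "1 \<le> k" and "k \<le> CARD('n)"
    and "\<rho> \<in> density_rank k"
  shows "let vX = cscale (\<i> / 2) (a ** \<rho> - \<rho> ** a);
             vY = cscale (1/2) (a ** \<rho> + \<rho> ** a) - cscale (trace (\<rho> ** a)) \<rho>
         in hermitian vX \<and> hermitian vY
          \<and> (\<forall>c. hermitian c \<longrightarrow> dd (f_obs c) \<rho> vX = L \<rho> (dd (e_obs a) \<rho>) (dd (f_obs c) \<rho>))
          \<and> (\<forall>c. hermitian c \<longrightarrow> dd (f_obs c) \<rho> vY = R \<rho> (dd (e_obs a) \<rho>) (dd (f_obs c) \<rho>))
          \<and> tangent_to (density_rank k) \<rho> vX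
          \<and> tangent_to (density_rank k) \<rho> vY"
proof -
  have \<rho>: "hermitian \<rho>" "trace \<rho> = 1"
    using \<open>\<rho> \<in> density_rank k\<close> by (auto simp: density_rank_def)
  show ?thesis
    unfolding Let_def
    using Lambda_D_dd_f_obs[OF assms(1,3) _ \<rho>] R_D_dd_f_obs[OF assms(2,3) _ \<rho>]
      hermitian_commutator[OF assms(3) \<rho>(1)] hermitian_centered_anticommutator[OF assms(3) \<rho>(1)]
      tangent_to_density_rank_commutator[OF assms(6,3)]
      tangent_to_density_rank_centered_anticommutator[OF assms(6,3)]
    by (simp add: dd_f_obs)
qed

end
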